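(* Let $G$ be a finite simple graph with no induced banner, and let $H$ be a homogeneous set of $G$. Then $G$ contains no induced odd hole if and only if both $G[H]$ and $G[(V(G)\setminus H) \cup \{h\}]$ contain no induced odd hole, for any vertex $h \in H$.
   Context: A hole is a chordless (induced) cycle with at least four vertices; it is odd if it has an odd number of vertices. A banner is the graph consisting of a hole on four vertices together with one additional vertex adjacent to exactly one vertex of that hole. A set $H \subseteq V(G)$ is homogeneous if $2 \leq |H| < |V(G)|$ and every vertex of $V(G)\setminus H$ is adjacent either to all of $H$ or to none of $H$. *)

theory Defs
  imports Main
begin

text \<open>A finite simple graph: finite vertex set V and a symmetric, irreflexive
adjacency relation E (only its restriction to V matters).
The induced subgraph G[S] is represented by the pair (S, E).\<close>

definition simple_graph :: "'a set \<Rightarrow> ('a \<Rightarrow> 'a \<Rightarrow> bool) \<Rightarrow> bool" where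
  "simple_graph V E \<longleftrightarrow> finite V \<and> (\<forall>x\<in>V. \<forall>y\<in>V. E x y \<longleftrightarrow> E y x) \<and> (\<forall>x\<in>V. \<not> E x x)"

definition is_hole :: "'a set \<Rightarrow> ('a \<Rightarrow> 'a \<Rightarrow> bool) \<Rightarrow> 'a list \<Rightarrow> bool" where
  "is_hole V E vs \<longleftrightarrow> length vs \<ge> 4 \<and> distinct vs \<and> set vs \<subseteq> V \<and>
     (\<forall>i<length vs. \<forall>j<length vs.
        E (vs ! i) (vs ! j) \<longleftrightarrow> (j = Suc i mod length vs \<or> i = Suc j mod length vs))"

definition has_odd_hole :: "'a set \<Rightarrow> ('a \<Rightarrow> 'a \<Rightarrow> bool) \<Rightarrow> bool" where
  "has_odd_hole V E \<longleftrightarrow> (\<exists>vs. is_hole V E vs \<and> odd (length vs))"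

definition has_banner :: "'a set \<Rightarrow> ('a \<Rightarrow> 'a \<Rightarrow> bool) \<Rightarrow> bool" where
  "has_banner V E \<longleftrightarrow> (\<exists>a b c d e. is_hole V E [a, b, c, d] \<and> e \<in> V \<and>
      e \<notin> {a, b, c, d} \<and> E e a \<and> \<not> E e b \<and> \<not> E e c \<and> \<not> E e d)"

definition homogeneous :: "'a set \<Rightarrow> ('a \<Rightarrow> 'a \<Rightarrow> bool) \<Rightarrow> 'a set \<Rightarrow> bool" where
  "homogeneous V E H \<longleftrightarrow> H \<subseteq> V \<and> 2 \<le> card H \<and> card H < card V \<and>
     (\<forall>v \<in> V - H. (\<forall>h\<in>H. E v h) \<or> (\<forall>h\<in>H. \<not> E v h))"

end

theory Submission
  imports Defs
begin

text \<open>A hole of length at least five cannot meet a homogeneous set \<open>H\<close> in two vertices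
while also leaving it. Where the hole enters \<open>H\<close> from a vertex \<open>v\<close> outside, \<open>v\<close> sees all
of \<open>H\<close>, so the second vertex of \<open>H\<close> on the hole is the other neighbour of \<open>v\<close>. The vertex
following the entry point is not adjacent to \<open>v\<close>, hence lies outside \<open>H\<close>; being adjacent
to one vertex of \<open>H\<close> it is adjacent to both, which is a chord. So an odd hole lies in \<open>H\<close>,
avoids \<open>H\<close>, or meets \<open>H\<close> in exactly one vertex, and that vertex may be replaced by \<open>h\<close>
because all vertices of \<open>H\<close> have the same neighbours outside \<open>H\<close>.\<close>

definition cyclically_adjacent :: "nat \<Rightarrow> nat \<Rightarrow> nat \<Rightarrow> bool" where
  "cyclically_adjacent n i j \<longleftrightarrow> j = Suc i mod n \<or> i = Suc j mod n"

lemma not_cyclically_adjacent_add: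
  assumes "a < n" "2 \<le> d" "d + 2 \<le> n"
  shows "\<not> cyclically_adjacent n a ((a + d) mod n)"
proof -
  have "(a + d) mod n = (if a + d < n then a + d else a + d - n)"
    using assms by (simp add: mod_if le_mod_geq)
  then show ?thesis
    using assms unfolding cyclically_adjacent_def by (auto simp: mod_Suc)
qed

lemma is_hole_adjacent_iff:
  assumes "is_hole V E vs" "i < length vs" "j < length vs"
  shows "E (vs ! i) (vs ! j) \<longleftrightarrow> cyclically_adjacent (length vs) i j"
  using assms unfolding is_hole_def cyclically_adjacent_def by blast

lemma is_hole_subset: "is_hole V E vs \<Longrightarrow> set vs \<subseteq> W \<Longrightarrow> is_hole W E vs"
  unfolding is_hole_def by blast

lemma is_hole_map:
  assumes "is_hole V E vs" "inj_on f (set vs)" "f ` set vs \<subseteq> W"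
    and "\<And>a b. a \<in> set vs \<Longrightarrow> b \<in> set vs \<Longrightarrow> E (f a) (f b) \<longleftrightarrow> E a b"
  shows "is_hole W E (map f vs)"
  using assms nth_mem unfolding is_hole_def by (auto simp: distinct_map)

lemma odd_hole_length_ge_5:
  assumes "is_hole V E vs" "odd (length vs)"
  shows "5 \<le> length vs"
proof -
  have "4 \<le> length vs" using assms(1) unfolding is_hole_def by blast
  then show ?thesis using assms(2) by presburger
qed

lemma homogeneous_adjacent_all:
  assumes "homogeneous V E H" "v \<in> V - H" "x \<in> H" "E v x" "y \<in> H"
  shows "E v y"
  using assms unfolding homogeneous_def by blast

lemma cyclic_list_enters_set:
  assumes "k < length xs" "xs ! k \<notin> A" "p < length xs" "xs ! p \<in> A"
  shows "\<exists>i<length xs. xs ! i \<notin> A \<and> xs ! (Suc i mod length xs) \<in> A"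
proof (rule ccontr)
  let ?n = "length xs"
  assume "\<not> ?thesis"
  then have stays: "xs ! (Suc i mod ?n) \<notin> A" if "i < ?n" "xs ! i \<notin> A" for i
    using that by blast
  have "xs ! ((k + m) mod ?n) \<notin> A" for m
  proof (induction m)
    case 0
    then show ?case using assms by simp
  next
    case (Suc m)
    have "(k + m) mod ?n < ?n" using assms(1) by (intro mod_less_divisor) linarith
    then have "xs ! (Suc ((k + m) mod ?n) mod ?n) \<notin> A" using stays Suc by blast
    then show ?case by (simp add: mod_Suc_eq)
  qed
  from this[of "p + ?n - k"] have "xs ! ((p + ?n) mod ?n) \<notin> A"
    using assms(1) by simp
  then show False using assms(3,4) by simp
qed

lemma hole_meets_homogeneous_at_most_once:
  assumes hom: "homogeneous V E H" and hole: "is_hole V E vs" and len: "5 \<le> length vs"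
    and z: "z \<in> set vs" "z \<notin> H" and x: "x \<in> set vs" "x \<in> H" and y: "y \<in> set vs" "y \<in> H"
  shows "x = y"
proof (rule ccontr)
  assume "x \<noteq> y"
  let ?n = "length vs"
  have sub: "set vs \<subseteq> V" using hole unfolding is_hole_def by blast
  note adj = is_hole_adjacent_iff[OF hole]
  obtain i where i: "i < ?n" "vs ! i \<notin> H" "vs ! (Suc i mod ?n) \<in> H"
    using cyclic_list_enters_set[of _ vs H] z x by (metis in_set_conv_nth)
  have vi: "vs ! i \<in> V - H" using i sub nth_mem by blast
  have n_pos: "0 < ?n" using len by linarith
  have si: "Suc i mod ?n < ?n" using mod_less_divisor[OF n_pos] .
  have "E (vs ! i) (vs ! (Suc i mod ?n))"
    using adj[OF i(1) si] by (simp add: cyclically_adjacent_def)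
  then have sees_H: "E (vs ! i) w" if "w \<in> H" for w
    using homogeneous_adjacent_all[OF hom vi i(3) _ that] by blast
  obtain j where j: "j < ?n" "vs ! j \<in> H" "vs ! j \<noteq> vs ! (Suc i mod ?n)"
    using x y \<open>x \<noteq> y\<close> by (metis in_set_conv_nth)
  have "cyclically_adjacent ?n i j" using adj i(1) j(1,2) sees_H by blast
  then have ij: "i = Suc j mod ?n" using j(3) unfolding cyclically_adjacent_def by auto
  define q where "q = (i + 2) mod ?n"
  have q: "q < ?n" unfolding q_def using mod_less_divisor[OF n_pos] .
  have q_j: "q = (j + 3) mod ?n"
    unfolding q_def ij by (simp only: Suc_eq_plus1 mod_add_left_eq add.assoc numeral_3_eq_3) simp
  have "\<not> E (vs ! i) (vs ! q)"
    using adj[OF i(1) q] not_cyclically_adjacent_add[OF i(1), of 2] len unfolding q_def by simp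
  then have vq: "vs ! q \<in> V - H" using sees_H q sub nth_mem by blast
  have "q = Suc (Suc i mod ?n) mod ?n" by (simp add: q_def mod_Suc_eq)
  then have "E (vs ! q) (vs ! (Suc i mod ?n))"
    using adj[OF q si] by (simp add: cyclically_adjacent_def)
  then have "E (vs ! q) (vs ! j)" using homogeneous_adjacent_all[OF hom vq i(3) _ j(2)] by blast
  moreover have "\<not> cyclically_adjacent ?n q j"
    using not_cyclically_adjacent_add[OF j(1), of 3] len
    by (auto simp: q_j cyclically_adjacent_def)
  ultimately show False using adj q j(1) by blast
qed

lemma hole_replace_homogeneous_vertex:
  assumes sg: "simple_graph V E" and hom: "homogeneous V E H" and hole: "is_hole V E vs"
    and x: "set vs \<inter> H = {x}" and h: "h \<in> H"
  shows "is_hole ((V - H) \<union> {h}) E (map (id(x := h)) vs)"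
proof (rule is_hole_map[OF hole])
  have sub: "set vs \<subseteq> V" using hole unfolding is_hole_def by blast
  have HV: "H \<subseteq> V" using hom unfolding homogeneous_def by blast
  have same_nbrs: "E v x \<longleftrightarrow> E v h" if "v \<in> set vs" "v \<noteq> x" for v
    using that x h sub homogeneous_adjacent_all[OF hom] by blast
  have "\<not> E h h" using sg HV h unfolding simple_graph_def by blast
  moreover have "\<not> E x x" using sg HV x unfolding simple_graph_def by blast
  moreover have "E h v \<longleftrightarrow> E v h" "E x v \<longleftrightarrow> E v x" if "v \<in> set vs" for v
    using that sg sub HV h x unfolding simple_graph_def by blast+
  ultimately show "E ((id(x := h)) a) ((id(x := h)) b) \<longleftrightarrow> E a b"
    if "a \<in> set vs" "b \<in> set vs" for a b
    using that same_nbrs by auto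
  show "inj_on (id(x := h)) (set vs)" using x h by (auto simp: inj_on_def)
  show "id(x := h) ` set vs \<subseteq> V - H \<union> {h}" using x sub by auto
qed

theorem mainTheorem4:
  fixes V :: "'a set" and E :: "'a \<Rightarrow> 'a \<Rightarrow> bool" and H :: "'a set" and h :: 'a
  assumes "simple_graph V E"
    and "\<not> has_banner V E"
    and "homogeneous V E H"
    and "h \<in> H"
  shows "\<not> has_odd_hole V E \<longleftrightarrow>
           (\<not> has_odd_hole H E \<and> \<not> has_odd_hole ((V - H) \<union> {h}) E)"
proof
  have "H \<subseteq> V" "(V - H) \<union> {h} \<subseteq> V" using assms(3,4) unfolding homogeneous_def by blast+
  then show "\<not> has_odd_hole H E \<and> \<not> has_odd_hole ((V - H) \<union> {h}) E"
    if "\<not> has_odd_hole V E"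
    using that unfolding has_odd_hole_def is_hole_def by blast
next
  assume no_odd: "\<not> has_odd_hole H E \<and> \<not> has_odd_hole ((V - H) \<union> {h}) E"
  show "\<not> has_odd_hole V E"
  proof
    assume "has_odd_hole V E"
    then obtain vs where hole: "is_hole V E vs" and odd: "odd (length vs)"
      unfolding has_odd_hole_def by blast
    have sub: "set vs \<subseteq> V" using hole unfolding is_hole_def by blast
    consider "set vs \<subseteq> H" | "set vs \<inter> H = {}" | x where "set vs \<inter> H = {x}"
      using hole_meets_homogeneous_at_most_once[OF assms(3) hole odd_hole_length_ge_5[OF hole odd]]
      by blast
    then show False
    proof cases
      case 1
      then show False using no_odd hole odd is_hole_subset unfolding has_odd_hole_def by blast
    next
      case 2
      then have "set vs \<subseteq> (V - H) \<union> {h}" using sub by blast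
      then show False using no_odd hole odd is_hole_subset unfolding has_odd_hole_def by blast
    next
      case 3
      then show False
        using no_odd odd hole_replace_homogeneous_vertex[OF assms(1,3) hole _ assms(4)]
        unfolding has_odd_hole_def by fastforce
    qed
  qed
qed

end
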